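(* A convex hexagon is affine regular if and only if both of the following hold: - all six of its vertex triangles have the same area; - for one of the triangles whose vertices are vertices of the hexagon and which has exactly one side in common with the hexagon (for example the triangle $013$ in the hexagon $012345$), its area is twice the area of a vertex triangle.
   Context: An affine map of the plane is a bijection of the plane that maps collinear points to collinear points. A polygon is affine regular if it is the image of a regular polygon under an affine map, with vertices corresponding in order. For a hexagon with vertices $0,\dots,5$ in cyclic order, the vertex triangles are the triangles with vertices $i-1,i,i+1$ (indices mod $6$). *)

theory Defs
  imports "HOL-Analysis.Analysis"
begin

type_synonym point = "real \<times> real"

text \<open>A hexagon is given by its vertices P 0, ..., P 5 (in cyclic order);
  indices are always taken mod 6.\<close>
type_synonym hexagon = "nat \<Rightarrow> point"

definition cross3 :: "point \<Rightarrow> point \<Rightarrow> point \<Rightarrow> real" where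
  "cross3 a b c = (fst b - fst a) * (snd c - snd a) - (fst c - fst a) * (snd b - snd a)"

definition tri_area :: "point \<Rightarrow> point \<Rightarrow> point \<Rightarrow> real" where
  "tri_area a b c = \<bar>cross3 a b c\<bar> / 2"

definition convex_hexagon :: "hexagon \<Rightarrow> bool" where
  "convex_hexagon P \<longleftrightarrow>
     (\<forall>i<6. \<forall>j<6. j \<noteq> i \<and> j \<noteq> (i+1) mod 6 \<longrightarrow> cross3 (P i) (P ((i+1) mod 6)) (P j) > 0) \<or>
     (\<forall>i<6. \<forall>j<6. j \<noteq> i \<and> j \<noteq> (i+1) mod 6 \<longrightarrow> cross3 (P i) (P ((i+1) mod 6)) (P j) < 0)"

definition affine_map :: "(point \<Rightarrow> point) \<Rightarrow> bool" where
  "affine_map f \<longleftrightarrow> bij f \<and>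
     (\<forall>a b c. collinear {a, b, c} \<longrightarrow> collinear {f a, f b, f c})"

definition regular_hexagon :: "hexagon \<Rightarrow> bool" where
  "regular_hexagon Q \<longleftrightarrow> (\<exists>c r \<theta> s. r > 0 \<and> (s = 1 \<or> s = -1) \<and>
     (\<forall>k<6. Q k = (fst c + r * cos (\<theta> + s * real k * pi / 3),
                   snd c + r * sin (\<theta> + s * real k * pi / 3))))"

definition affine_regular :: "hexagon \<Rightarrow> bool" where
  "affine_regular P \<longleftrightarrow> (\<exists>f Q. affine_map f \<and> regular_hexagon Q \<and> (\<forall>k<6. P k = f (Q k)))"

definition vertex_tri_area :: "hexagon \<Rightarrow> nat \<Rightarrow> real" where
  "vertex_tri_area P i = tri_area (P ((i + 5) mod 6)) (P (i mod 6)) (P ((i + 1) mod 6))"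

end

theory Submission
  imports Defs
begin

(* A hexagon is affine regular iff it has a centre c with P (k+1) = P k + P (k+2) - c, i.e.
   c, P k, P (k+1), P (k+2) span a parallelogram, and c, P 0, P 1 are not collinear: a
   collinearity-preserving bijection of the plane maps parallelograms to parallelograms, and
   conversely an affine chart maps the unit regular hexagon onto every such hexagon.

   If the signed vertex triangles of a convex hexagon all have area K, the edge vectors satisfy
   det2 (e k) (e (k+1)) = K and hence e (k+2) = l k * e (k+1) - e k with l k = det2 (e k) (e (k+2)) / K.
   The triangle P k, P (k+1), P (k+3) has signed area K (1 + l k), which is nonzero by
   convexity; given this, the hexagon closes up only if l k * l (k+1) = 1. The hypothesis on
   the triangle sharing one side with the hexagon gives l k = 1 for one k, hence for all k,
   and then e (k+2) = e (k+1) - e k is the parallelogram condition. *)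

definition det2 :: "point \<Rightarrow> point \<Rightarrow> real" where
  "det2 u v = fst u * snd v - snd u * fst v"

lemma cross3_eq_det2: "cross3 a b c = det2 (b - a) (c - a)"
  by (simp add: cross3_def det2_def)

lemma det2_swap: "det2 u v = - det2 v u"
  by (simp add: det2_def)

lemma det2_cramer: "det2 u v *\<^sub>R x = det2 x v *\<^sub>R u + det2 u x *\<^sub>R v"
  by (simp add: det2_def prod_eq_iff algebra_simps)

lemma det2_eq_0_iff: "det2 x y = 0 \<longleftrightarrow> x = 0 \<or> (\<exists>t. y = t *\<^sub>R x)"
proof
  assume det: "det2 x y = 0"
  show "x = 0 \<or> (\<exists>t. y = t *\<^sub>R x)"
  proof (cases "x = 0")
    case False
    define x' where "x' = (- snd x, fst x)"
    have "det2 x x' = (fst x)\<^sup>2 + (snd x)\<^sup>2"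
      by (simp add: x'_def det2_def power2_eq_square)
    also have "\<dots> \<noteq> 0"
      using False by (simp add: prod_eq_iff)
    finally have "det2 x x' \<noteq> 0" .
    then have "y = inverse (det2 x x') *\<^sub>R (det2 x x' *\<^sub>R y)"
      by simp
    also have "\<dots> = (det2 y x' / det2 x x') *\<^sub>R x"
      using det2_cramer[of x x' y] det by (simp add: divide_inverse_commute)
    finally show ?thesis by blast
  qed simp
qed (auto simp: det2_def)

lemma collinear_iff_cross3: "collinear {a, b, c} \<longleftrightarrow> cross3 a b c = 0"
proof -
  have "cross3 a b c = - det2 (a - b) (c - b)"
    by (simp add: cross3_def det2_def algebra_simps)
  then show ?thesis
    by (auto simp: collinear_3 collinear_lemma det2_eq_0_iff)
qed

lemma collinear_imp_in_affine_hull_2: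
  assumes "x \<in> affine hull {u, v}" "y \<in> affine hull {u, v}" "x \<noteq> y" "collinear {x, y, z}"
  shows "z \<in> affine hull {u, v}"
proof -
  have "affine hull {x, y} \<subseteq> affine hull {u, v}"
    using assms(1,2) by (simp add: hull_minimal)
  then show ?thesis
    using assms(3,4) collinear_3_affine_hull by blast
qed

lemma noncollinear_midpoint_decomposition:
  fixes a b c x :: point
  assumes "\<not> collinear {a, b, c}"
  obtains p q where "p \<in> affine hull {a, b}" "q \<in> affine hull {a, c}" "x = midpoint p q"
proof -
  define D where "D = det2 (b - a) (c - a)"
  have "D \<noteq> 0"
    using assms by (simp add: D_def collinear_iff_cross3 cross3_eq_det2)
  define s where "s = det2 (x - a) (c - a) / D"
  define t where "t = det2 (b - a) (x - a) / D"
  have "D *\<^sub>R (x - a) = D *\<^sub>R (s *\<^sub>R (b - a) + t *\<^sub>R (c - a))"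
    using det2_cramer[of "b - a" "c - a" "x - a"] \<open>D \<noteq> 0\<close>
    by (simp add: D_def s_def t_def scaleR_add_right)
  then have "x - a = s *\<^sub>R (b - a) + t *\<^sub>R (c - a)"
    using \<open>D \<noteq> 0\<close> by simp
  then have "x = a + s *\<^sub>R (b - a) + t *\<^sub>R (c - a)"
    by (simp add: algebra_simps)
  moreover have "(a + (2 * s) *\<^sub>R (b - a)) + (a + (2 * t) *\<^sub>R (c - a))
      = 2 *\<^sub>R (a + s *\<^sub>R (b - a) + t *\<^sub>R (c - a))"
    by (simp add: algebra_simps scaleR_2)
  ultimately have "x = midpoint (a + (2 * s) *\<^sub>R (b - a)) (a + (2 * t) *\<^sub>R (c - a))"
    by (simp add: midpoint_def)
  moreover have "a + (2 * s) *\<^sub>R (b - a) \<in> affine hull {a, b}" "a + (2 * t) *\<^sub>R (c - a) \<in> affine hull {a, c}"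
    unfolding affine_hull_2_alt by blast+
  ultimately show ?thesis
    using that by blast
qed

(* If f collapsed a, b, c onto a line L, it would map the lines ab and ac into L, hence
   every point of the plane (a midpoint of points on them) into L, contradicting surjectivity. *)
lemma affine_map_noncollinear:
  assumes f: "affine_map f" and nc: "\<not> collinear {a, b, c}"
  shows "\<not> collinear {f a, f b, f c}"
proof
  assume col: "collinear {f a, f b, f c}"
  have "inj f" "surj f" and f_col: "\<And>x y z. collinear {x, y, z} \<Longrightarrow> collinear {f x, f y, f z}"
    using f by (auto simp: affine_map_def bij_def)
  have "a \<noteq> b" "a \<noteq> c"
    using nc by (auto simp: insert_commute)
  then have fab: "f a \<noteq> f b" and fac: "f a \<noteq> f c"
    using \<open>inj f\<close> by (auto dest: injD)
  define L where "L = affine hull {f a, f b}"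
  have "f a \<in> L" "f c \<in> L"
    using col fab by (simp_all add: L_def hull_inc collinear_3_affine_hull)
  have on_ab: "f x \<in> L" if "x \<in> affine hull {a, b}" for x
    using f_col[OF affine_hull_3_imp_collinear[OF that]] fab by (simp add: L_def collinear_3_affine_hull)
  have on_ac: "f x \<in> L" if "x \<in> affine hull {a, c}" for x
    using collinear_imp_in_affine_hull_2 \<open>f a \<in> L\<close> \<open>f c \<in> L\<close> fac f_col affine_hull_3_imp_collinear that
    unfolding L_def by blast
  have "f x \<in> L" for x
  proof -
    obtain p q where "p \<in> affine hull {a, b}" "q \<in> affine hull {a, c}" and x: "x = midpoint p q"
      using noncollinear_midpoint_decomposition[OF nc] by blast
    then have "f p \<in> L" "f q \<in> L"
      using on_ab on_ac by blast+
    show ?thesis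
    proof (cases "p = q")
      case False
      then have "f p \<noteq> f q"
        using \<open>inj f\<close> by (auto dest: injD)
      moreover have "collinear {f p, f q, f x}"
        using f_col collinear_midpoint[of p q] by (simp add: x insert_commute)
      ultimately show ?thesis
        using collinear_imp_in_affine_hull_2 \<open>f p \<in> L\<close> \<open>f q \<in> L\<close> unfolding L_def by blast
    qed (use x \<open>f p \<in> L\<close> in simp)
  qed
  then have "UNIV \<subseteq> L"
    using \<open>surj f\<close> by (metis image_subset_iff surj_def)
  moreover have "collinear L"
    by (simp add: L_def collinear_affine_hull_collinear)
  ultimately have "collinear {(0, 0), (1, 0), (0, 1) :: point}"
    using collinear_subset by blast
  then show False
    by (simp add: collinear_iff_cross3 cross3_def)
qed

lemma nonparallel_lines_meet:
  assumes "det2 (b - a) (d - c) \<noteq> 0"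
  shows "\<exists>y. collinear {a, b, y} \<and> collinear {c, d, y}"
proof -
  define t where "t = det2 (b - a) (c - a) / det2 (b - a) (d - c)"
  define y where "y = c - t *\<^sub>R (d - c)"
  have "cross3 a b y = det2 (b - a) (c - a) - t * det2 (b - a) (d - c)"
    by (simp add: y_def cross3_def det2_def algebra_simps)
  then have "cross3 a b y = 0"
    using assms by (simp add: t_def)
  moreover have "cross3 c d y = 0"
    by (simp add: y_def cross3_def algebra_simps)
  ultimately show ?thesis
    unfolding collinear_iff_cross3 by blast
qed

(* With d = b + c - a, the lines ab, cd and ac, bd are disjoint; so are their images,
   which are therefore parallel. *)
lemma affine_map_parallelogram:
  assumes f: "affine_map f" and nc: "\<not> collinear {a, b, c}"
  shows "f (b + c - a) = f b + f c - f a"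
proof -
  have "surj f"
    using f by (simp add: affine_map_def bij_def)
  have col_pre: "collinear {x, y, z}" if "collinear {f x, f y, f z}" for x y z
    using affine_map_noncollinear[OF f] that by blast
  have parallel: "det2 (f v - f u) (f (v + w - u) - f w) = 0"
    if "\<not> collinear {u, v, w}" for u v w
  proof (rule ccontr)
    assume "det2 (f v - f u) (f (v + w - u) - f w) \<noteq> 0"
    then obtain y where "collinear {f u, f v, y}" "collinear {f w, f (v + w - u), y}"
      using nonparallel_lines_meet by blast
    moreover obtain x where "y = f x"
      using \<open>surj f\<close> by (metis surj_def)
    ultimately have "cross3 u v x = 0" "cross3 w (v + w - u) x = 0"
      using col_pre by (simp_all add: collinear_iff_cross3)
    moreover have "cross3 w (v + w - u) x = cross3 u v x - cross3 u v w"
      by (simp add: cross3_def algebra_simps)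
    ultimately show False
      using that by (simp add: collinear_iff_cross3)
  qed
  define g where "g = f (b + c - a) - f b - f c + f a"
  have "det2 (f b - f a) g = 0" "det2 (f c - f a) g = 0"
    using parallel[OF nc] parallel[of a c b] nc
    by (simp_all add: g_def det2_def insert_commute algebra_simps)
  moreover have "det2 (f b - f a) (f c - f a) \<noteq> 0"
    using affine_map_noncollinear[OF f nc] by (simp add: collinear_iff_cross3 cross3_eq_det2)
  ultimately have "g = 0"
    using det2_cramer[of "f b - f a" "f c - f a" g] det2_swap[of g] by simp
  then show ?thesis
    by (simp add: g_def algebra_simps)
qed

lemma vertex_tri_area_simps:
  "vertex_tri_area P 0 = tri_area (P 5) (P 0) (P 1)"
  "vertex_tri_area P 1 = tri_area (P 0) (P 1) (P 2)"
  "vertex_tri_area P 2 = tri_area (P 1) (P 2) (P 3)"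
  "vertex_tri_area P 3 = tri_area (P 2) (P 3) (P 4)"
  "vertex_tri_area P 4 = tri_area (P 3) (P 4) (P 5)"
  "vertex_tri_area P 5 = tri_area (P 4) (P 5) (P 0)"
  by (simp_all add: vertex_tri_area_def flip: One_nat_def)

definition centred_at :: "point \<Rightarrow> hexagon \<Rightarrow> bool" where
  "centred_at c P \<longleftrightarrow> (\<forall>k<4. P (k + 1) = P k + P (k + 2) - c)"

lemma centred_at_vertices:
  assumes "centred_at c P"
  shows "P 2 = c + (P 1 - P 0)" "P 3 = c - (P 0 - c)" "P 4 = c - (P 1 - c)" "P 5 = c + (P 0 - P 1)"
proof -
  have step: "P (k + 2) = P (k + 1) - P k + c" if "k < 4" for k
    using assms that by (simp add: centred_at_def algebra_simps)
  have rec: "P 2 = P 1 - P 0 + c" "P 3 = P 2 - P 1 + c" "P 4 = P 3 - P 2 + c" "P 5 = P 4 - P 3 + c"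
    using step[of 0] step[of 1] step[of 2] step[of 3] by (simp_all add: eval_nat_numeral)
  show "P 2 = c + (P 1 - P 0)" "P 3 = c - (P 0 - c)" "P 4 = c - (P 1 - c)" "P 5 = c + (P 0 - P 1)"
    by (simp_all add: rec algebra_simps)
qed

lemma centred_at_eqI:
  assumes "centred_at c P" "centred_at c P'" "P 0 = P' 0" "P 1 = P' 1" "k < 6"
  shows "P k = P' k"
proof -
  have "k = 0 \<or> k = 1 \<or> k = 2 \<or> k = 3 \<or> k = 4 \<or> k = 5"
    using assms(5) by auto
  then show ?thesis
    using assms(3,4) centred_at_vertices[OF assms(1)] centred_at_vertices[OF assms(2)] by auto
qed

lemma centred_at_cross3:
  assumes "centred_at c P"
  shows "cross3 (P 0) (P 1) (P 2) = cross3 c (P 0) (P 1)"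
  by (simp add: centred_at_vertices[OF assms] cross3_def algebra_simps)

lemma centred_at_areas:
  assumes "centred_at c P"
  shows "i < 6 \<Longrightarrow> vertex_tri_area P i = tri_area c (P 0) (P 1)"
    and "tri_area (P 0) (P 1) (P 3) = 2 * tri_area c (P 0) (P 1)"
proof -
  note P = centred_at_vertices[OF assms]
  assume "i < 6"
  then have "i \<in> {0, 1, 2, 3, 4, 5}"
    by auto
  then show "vertex_tri_area P i = tri_area c (P 0) (P 1)"
    by (auto simp: vertex_tri_area_simps tri_area_def cross3_def P algebra_simps simp flip: One_nat_def)
next
  have "cross3 (P 0) (P 1) (P 3) = 2 * cross3 c (P 0) (P 1)"
    by (simp add: centred_at_vertices[OF assms] cross3_def algebra_simps)
  then show "tri_area (P 0) (P 1) (P 3) = 2 * tri_area c (P 0) (P 1)"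
    by (simp add: tri_area_def abs_mult)
qed

lemma cross3_polar:
  "cross3 c (fst c + r * cos \<alpha>, snd c + r * sin \<alpha>) (fst c + r * cos \<beta>, snd c + r * sin \<beta>)
     = r\<^sup>2 * sin (\<beta> - \<alpha>)"
  by (simp add: cross3_def sin_diff power2_eq_square algebra_simps)

context
  fixes Q :: hexagon and c :: point and r \<theta> s :: real
  assumes s: "s = 1 \<or> s = -1"
    and Q: "\<And>k. k < 6 \<Longrightarrow> Q k = (fst c + r * cos (\<theta> + s * real k * pi / 3),
                                  snd c + r * sin (\<theta> + s * real k * pi / 3))"
begin

lemma regular_hexagon_centred: "centred_at c Q"
  unfolding centred_at_def
proof (intro allI impI)
  fix k :: nat
  assume "k < 4"
  define \<psi> where "\<psi> = \<theta> + s * real (k + 1) * pi / 3"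
  define \<delta> where "\<delta> = s * pi / 3"
  have "cos \<delta> = 1 / 2"
    using s by (auto simp: \<delta>_def cos_60)
  have "\<theta> + s * real k * pi / 3 = \<psi> - \<delta>" "\<theta> + s * real (k + 2) * pi / 3 = \<psi> + \<delta>"
    by (simp_all add: \<psi>_def \<delta>_def algebra_simps)
  then have "Q k = (fst c + r * cos (\<psi> - \<delta>), snd c + r * sin (\<psi> - \<delta>))"
    and "Q (k + 1) = (fst c + r * cos \<psi>, snd c + r * sin \<psi>)"
    and "Q (k + 2) = (fst c + r * cos (\<psi> + \<delta>), snd c + r * sin (\<psi> + \<delta>))"
    using Q[of k] Q[of "k + 1"] Q[of "k + 2"] \<open>k < 4\<close> by (simp_all only: \<psi>_def)
  then show "Q (k + 1) = Q k + Q (k + 2) - c"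
    using \<open>cos \<delta> = 1 / 2\<close> by (simp add: prod_eq_iff cos_add cos_diff sin_add sin_diff algebra_simps)
qed

lemma regular_hexagon_noncollinear:
  assumes "r \<noteq> 0" "i + d < 6" "d = 1 \<or> d = 2"
  shows "\<not> collinear {c, Q i, Q (i + d)}"
proof -
  have "0 < sin (real d * pi / 3)"
    using assms(3) by (intro sin_gt_zero) auto
  moreover have "cross3 c (Q i) (Q (i + d)) = r\<^sup>2 * (s * sin (real d * pi / 3))"
  proof -
    have "cross3 c (Q i) (Q (i + d))
        = r\<^sup>2 * sin ((\<theta> + s * real (i + d) * pi / 3) - (\<theta> + s * real i * pi / 3))"
      using assms(2) by (simp only: Q cross3_polar)
    also have "(\<theta> + s * real (i + d) * pi / 3) - (\<theta> + s * real i * pi / 3) = s * (real d * pi / 3)"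
      by (simp add: algebra_simps)
    also have "sin (s * (real d * pi / 3)) = s * sin (real d * pi / 3)"
      using s by auto
    finally show ?thesis .
  qed
  ultimately show ?thesis
    using assms(1) s by (auto simp: collinear_iff_cross3)
qed

end

definition unit_hexagon :: hexagon where
  "unit_hexagon k = (cos (real k * pi / 3), sin (real k * pi / 3))"

lemma unit_hexagon_polar:
  "unit_hexagon k = (fst 0 + 1 * cos (0 + 1 * real k * pi / 3), snd 0 + 1 * sin (0 + 1 * real k * pi / 3))"
  by (simp add: unit_hexagon_def)

lemma regular_unit_hexagon: "regular_hexagon unit_hexagon"
  unfolding regular_hexagon_def using unit_hexagon_polar by (intro exI[of _ 0] exI[of _ 1]) auto

lemma centred_at_unit_hexagon: "centred_at 0 unit_hexagon"
  using regular_hexagon_centred[of 1 unit_hexagon 0 1 0] unit_hexagon_polar by simp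

lemma affine_map_chart:
  assumes "det2 u w \<noteq> 0"
  shows "affine_map (\<lambda>x. c + fst x *\<^sub>R u + snd x *\<^sub>R w)" (is "affine_map ?f")
  unfolding affine_map_def
proof (intro conjI allI impI)
  define g where "g y = (det2 (y - c) w / det2 u w, det2 u (y - c) / det2 u w)" for y
  have "g (?f x) = x" for x
    using assms by (simp add: g_def det2_def prod_eq_iff field_simps)
  moreover have "?f (g y) = y" for y
  proof -
    have "det2 u w *\<^sub>R (y - c) = det2 u w *\<^sub>R (fst (g y) *\<^sub>R u + snd (g y) *\<^sub>R w)"
      using det2_cramer[of u w "y - c"] assms by (simp add: g_def scaleR_add_right)
    then have "y - c = fst (g y) *\<^sub>R u + snd (g y) *\<^sub>R w"
      using assms by simp
    then show ?thesis
      by (simp add: algebra_simps)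
  qed
  ultimately show "bij ?f"
    by (intro o_bij[of g]) auto
next
  fix a b d :: point
  have "cross3 (?f a) (?f b) (?f d) = det2 u w * cross3 a b d"
    by (simp add: cross3_def det2_def algebra_simps)
  then show "collinear {a, b, d} \<Longrightarrow> collinear {?f a, ?f b, ?f d}"
    by (simp add: collinear_iff_cross3)
qed

lemma affine_regular_imp_centred:
  assumes "affine_regular P"
  shows "\<exists>c. centred_at c P \<and> cross3 c (P 0) (P 1) \<noteq> 0"
proof -
  obtain f Q where f: "affine_map f" and "regular_hexagon Q" and P: "\<And>k. k < 6 \<Longrightarrow> P k = f (Q k)"
    using assms by (auto simp: affine_regular_def)
  obtain c r \<theta> s where "r > 0" "s = 1 \<or> s = -1"
    and Q: "\<And>k. k < 6 \<Longrightarrow> Q k = (fst c + r * cos (\<theta> + s * real k * pi / 3),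
                                snd c + r * sin (\<theta> + s * real k * pi / 3))"
    using \<open>regular_hexagon Q\<close> unfolding regular_hexagon_def by blast
  note nc = regular_hexagon_noncollinear[of s Q c r \<theta>, OF \<open>s = 1 \<or> s = -1\<close> Q]
  have "centred_at (f c) P"
    unfolding centred_at_def
  proof (intro allI impI)
    fix k :: nat
    assume "k < 4"
    have "Q (k + 1) = Q k + Q (k + 2) - c"
      using regular_hexagon_centred[OF \<open>s = 1 \<or> s = -1\<close> Q] \<open>k < 4\<close> by (simp add: centred_at_def)
    then show "P (k + 1) = P k + P (k + 2) - f c"
      using affine_map_parallelogram[OF f nc[of k 2]] P \<open>k < 4\<close> \<open>r > 0\<close> by simp
  qed
  moreover have "cross3 (f c) (P 0) (P 1) \<noteq> 0"
    using affine_map_noncollinear[OF f nc[of 0 1]] P \<open>r > 0\<close> by (simp add: collinear_iff_cross3)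
  ultimately show ?thesis
    by blast
qed

lemma centred_imp_affine_regular:
  assumes "centred_at c P" and "cross3 c (P 0) (P 1) \<noteq> 0"
  shows "affine_regular P"
proof -
  define u where "u = P 0 - c"
  define \<kappa> :: real where "\<kappa> = 2 / sqrt 3"
  \<comment> \<open>chosen so that f maps the vertex (1/2, sqrt 3 / 2) of the unit hexagon to P 1\<close>
  define w where "w = \<kappa> *\<^sub>R (P 1 - c - (1 / 2) *\<^sub>R u)"
  define f where "f x = c + fst x *\<^sub>R u + snd x *\<^sub>R w" for x :: point
  have "det2 u w = \<kappa> * det2 u (P 1 - c)"
    by (simp add: w_def det2_def algebra_simps)
  also have "det2 u (P 1 - c) = cross3 c (P 0) (P 1)"
    by (simp add: u_def cross3_eq_det2)
  finally have "affine_map f"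
    unfolding f_def using assms(2) by (intro affine_map_chart) (simp add: \<kappa>_def)
  have "f (a + b - d) = f a + f b - f d" for a b d
    by (simp add: f_def algebra_simps)
  then have "centred_at (f 0) (f \<circ> unit_hexagon)"
    using centred_at_unit_hexagon unfolding centred_at_def by (metis comp_apply)
  moreover have "f 0 = c" "f (unit_hexagon 0) = P 0"
    by (simp_all add: f_def unit_hexagon_def u_def)
  moreover have "f (unit_hexagon 1) = P 1"
  proof -
    have "sqrt 3 / 2 * \<kappa> = 1"
      by (simp add: \<kappa>_def)
    then show ?thesis
      by (simp add: f_def unit_hexagon_def w_def u_def cos_60 sin_60 algebra_simps)
  qed
  ultimately have "P k = (f \<circ> unit_hexagon) k" if "k < 6" for k
    using centred_at_eqI[OF assms(1), of "f \<circ> unit_hexagon" k] that by simp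
  then show ?thesis
    using \<open>affine_map f\<close> regular_unit_hexagon unfolding affine_regular_def by auto
qed

lemma det2_recurrence:
  assumes "det2 a b = K" "det2 b d = K" "K \<noteq> 0"
  shows "d = (det2 a d / K) *\<^sub>R b - a"
proof -
  have "K *\<^sub>R d = K *\<^sub>R ((det2 a d / K) *\<^sub>R b - a)"
    using det2_cramer[of a b d] det2_swap[of d b] assms by (simp add: algebra_simps)
  then show ?thesis
    using assms(3) by simp
qed

(* Writing every edge in the basis e0, e1 by det2_recurrence, the closing condition becomes
   two scalar equations in the ratios det2 e_k e_(k+2) / K. *)
lemma closed_hexagon_det2:
  assumes closed: "e0 + e1 + e2 + e3 + e4 + e5 = 0" and "K \<noteq> 0"
    and K: "det2 e0 e1 = K" "det2 e1 e2 = K" "det2 e2 e3 = K" "det2 e3 e4 = K" "det2 e4 e5 = K"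
      "det2 e5 e0 = K"
    and "K + det2 e4 e0 \<noteq> 0"
  shows "det2 e5 e1 * det2 e0 e2 = K\<^sup>2"
proof -
  define l0 l1 l2 l4 where "l0 = det2 e5 e1 / K" and "l1 = det2 e0 e2 / K"
    and "l2 = det2 e1 e3 / K" and "l4 = det2 e4 e0 / K"
  have e1: "e1 = l0 *\<^sub>R e0 - e5" and e2: "e2 = l1 *\<^sub>R e1 - e0" and e3: "e3 = l2 *\<^sub>R e2 - e1"
    and e0: "e0 = l4 *\<^sub>R e5 - e4"
    unfolding l0_def l1_def l2_def l4_def using K \<open>K \<noteq> 0\<close> by (auto intro: det2_recurrence)
  define c0 c1 where "c0 = l4 * l0 + l0 - l2 - 1" and "c1 = l1 * l2 + l1 - l4 - 1"
  have "e0 + e1 + e2 + e3 + e4 + e5 = c0 *\<^sub>R e0 + c1 *\<^sub>R e1"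
  proof -
    have e5: "e5 = l0 *\<^sub>R e0 - e1"
      using e1 by (simp add: algebra_simps)
    have "e4 = l4 *\<^sub>R e5 - e0"
      using e0 by (simp add: algebra_simps)
    then have e4: "e4 = (l4 * l0 - 1) *\<^sub>R e0 - l4 *\<^sub>R e1"
      by (simp add: e5 algebra_simps)
    show ?thesis
      unfolding e5 e4 e3 e2 c0_def c1_def by (simp add: algebra_simps)
  qed
  then have zero: "c0 *\<^sub>R e0 + c1 *\<^sub>R e1 = 0"
    using closed by simp
  have "c0 * K = det2 (c0 *\<^sub>R e0 + c1 *\<^sub>R e1) e1" "c1 * K = det2 e0 (c0 *\<^sub>R e0 + c1 *\<^sub>R e1)"
    using K(1) by (simp_all add: det2_def algebra_simps)
  then have "c0 = 0" "c1 = 0"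
    unfolding zero using \<open>K \<noteq> 0\<close> by (simp_all add: det2_def)
  then have "l0 * (1 + l4) = 1 + l2" "l1 * (1 + l2) = 1 + l4"
    using \<open>K \<noteq> 0\<close> by (simp_all add: c0_def c1_def algebra_simps)
  moreover have "1 + l4 \<noteq> 0"
    using assms(9) \<open>K \<noteq> 0\<close> by (simp add: l4_def field_simps)
  ultimately have "l0 * l1 = 1"
    by (metis mult.assoc mult.commute mult_cancel_right2)
  then show ?thesis
    using \<open>K \<noteq> 0\<close> by (simp add: l0_def l1_def field_simps power2_eq_square)
qed

lemma periodic_propagation:
  fixes L :: "nat \<Rightarrow> 'a"
  assumes "0 < n" and periodic: "\<And>k. L (k + n) = L k"
    and step: "\<And>k. L k = x \<Longrightarrow> L (Suc k) = x" and "L m = x"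
  shows "L k = x"
proof -
  have from_m: "L (m + j) = x" for j
    by (induction j) (simp_all add: step \<open>L m = x\<close>)
  have "L (k + j * n) = L k" for j
  proof (induction j)
    case (Suc j)
    have "k + Suc j * n = (k + j * n) + n"
      by simp
    then show ?case
      using Suc periodic by metis
  qed simp
  moreover have "k + m * n = m + (k + m * n - m)"
    using \<open>0 < n\<close> by (simp add: add.commute le_add2 trans_le_add2)
  ultimately show ?thesis
    by (metis from_m)
qed

lemma second_differences_imp_centre:
  fixes p :: "nat \<Rightarrow> point"
  assumes "\<And>k. p (k + 3) - p (k + 2) = (p (k + 2) - p (k + 1)) - (p (k + 1) - p k)"
  shows "\<exists>c. \<forall>k. p (k + 1) = p k + p (k + 2) - c"
proof -
  define c where "c k = p k + p (k + 2) - p (k + 1)" for k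
  have "c (Suc k) = c k" for k
    using assms[of k] by (simp add: c_def eval_nat_numeral algebra_simps)
  then have "c k = c 0" for k
    by (induction k) simp_all
  then have "p (k + 1) = p k + p (k + 2) - c 0" for k
    by (metis c_def add_diff_cancel_left' diff_add_cancel)
  then show ?thesis
    by blast
qed

lemma periodic_hexagon_centred:
  fixes p :: "nat \<Rightarrow> point"
  assumes periodic: "\<And>k. p (k + 6) = p k"
    and vertex_K: "\<And>k. cross3 (p k) (p (k + 1)) (p (k + 2)) = K" and "K \<noteq> 0"
    and skip: "\<And>k. cross3 (p k) (p (k + 1)) (p (k + 3)) \<noteq> 0"
    and double: "cross3 (p m) (p (m + 1)) (p (m + 3)) = 2 * K \<or> cross3 (p m) (p (m + 2)) (p (m + 3)) = 2 * K"
  shows "\<exists>c. \<forall>k. p (k + 1) = p k + p (k + 2) - c"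
proof -
  define e where "e k = p (k + 1) - p k" for k
  define L where "L k = det2 (e k) (e (k + 2))" for k
  have e_periodic: "e (k + 6) = e k" for k
    using periodic[of k] periodic[of "k + 1"] by (simp add: e_def eval_nat_numeral)
  have L_periodic: "L (k + 6) = L k" for k
    using e_periodic[of k] e_periodic[of "k + 2"] by (simp add: L_def eval_nat_numeral)
  have edge: "det2 (e k) (e (k + 1)) = K" for k
    using vertex_K[of k] by (simp add: e_def cross3_def det2_def eval_nat_numeral algebra_simps)
  have skip_L: "cross3 (p k) (p (k + 1)) (p (k + 3)) = K + L k"
    and skip_L': "cross3 (p k) (p (k + 2)) (p (k + 3)) = L k + K" for k
    using vertex_K[of k] vertex_K[of "k + 1"]
    by (simp_all add: L_def e_def cross3_def det2_def eval_nat_numeral algebra_simps)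
  have L_mult: "L k * L (k + 1) = K\<^sup>2" for k
  proof -
    have "e (k + 1) + e (k + 2) + e (k + 3) + e (k + 4) + e (k + 5) + e k = 0"
      using periodic[of k] by (simp add: e_def eval_nat_numeral)
    moreover have "det2 (e (k + 5)) (e k) = K" "K + det2 (e (k + 5)) (e (k + 1)) \<noteq> 0"
      using edge[of "k + 5"] e_periodic[of k] skip[of "k + 5"] skip_L[of "k + 5"] e_periodic[of "k + 1"]
      by (simp_all add: L_def eval_nat_numeral)
    ultimately show ?thesis
      using closed_hexagon_det2[of "e (k + 1)" "e (k + 2)" "e (k + 3)" "e (k + 4)" "e (k + 5)" "e k" K]
        edge[of k] edge[of "k + 1"] edge[of "k + 2"] edge[of "k + 3"] edge[of "k + 4"] \<open>K \<noteq> 0\<close>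
      by (simp add: L_def mult.commute eval_nat_numeral)
  qed
  have "L m = K"
    using double skip_L[of m] skip_L'[of m] by auto
  then have L: "L k = K" for k
  proof (rule periodic_propagation[of 6 L, rotated 3])
    show "L (Suc j) = K" if "L j = K" for j
      using L_mult[of j] that \<open>K \<noteq> 0\<close> by (simp add: power2_eq_square)
  qed (simp_all add: L_periodic)
  have e_rec: "e (k + 2) = e (k + 1) - e k" for k
    using det2_recurrence[OF edge[of k] edge[of "k + 1"] \<open>K \<noteq> 0\<close>] L[of k] \<open>K \<noteq> 0\<close>
    by (simp add: L_def)
  then show ?thesis
    by (intro second_differences_imp_centre) (simp add: e_def eval_nat_numeral)
qed

definition vertex :: "hexagon \<Rightarrow> nat \<Rightarrow> point" where
  "vertex P k = P (k mod 6)"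

lemma vertex_tri_area_vertex:
  "vertex_tri_area P (Suc k mod 6) = tri_area (vertex P k) (vertex P (k + 1)) (vertex P (k + 2))"
proof -
  have "(Suc k mod 6 + 5) mod 6 = k mod 6" "(Suc k mod 6 + 1) mod 6 = (k + 2) mod 6"
    by presburger+
  then show ?thesis
    by (simp add: vertex_tri_area_def vertex_def)
qed

lemma convex_hexagon_orientation:
  fixes k d :: nat
  assumes "convex_hexagon P" "2 \<le> d" "d \<le> 5"
  shows "0 < cross3 (vertex P k) (vertex P (k + 1)) (vertex P (k + d)) * cross3 (P 0) (P 1) (P 2)"
proof -
  have idx: "(k mod 6 + 1) mod 6 = (k + 1) mod 6" "(k + d) mod 6 \<noteq> k mod 6"
    "(k + d) mod 6 \<noteq> (k + 1) mod 6"
    using assms(2,3) by presburger+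
  from assms(1) consider
      "\<forall>i<6. \<forall>j<6. j \<noteq> i \<and> j \<noteq> (i + 1) mod 6 \<longrightarrow> 0 < cross3 (P i) (P ((i + 1) mod 6)) (P j)"
    | "\<forall>i<6. \<forall>j<6. j \<noteq> i \<and> j \<noteq> (i + 1) mod 6 \<longrightarrow> cross3 (P i) (P ((i + 1) mod 6)) (P j) < 0"
    unfolding convex_hexagon_def by blast
  then show ?thesis
  proof cases
    case 1
    have "0 < cross3 (P (k mod 6)) (P ((k mod 6 + 1) mod 6)) (P ((k + d) mod 6))"
      using idx by (intro 1[rule_format]) auto
    moreover have "0 < cross3 (P 0) (P 1) (P 2)"
      using 1[rule_format, of 0 2] by simp
    ultimately show ?thesis
      using idx(1) by (simp add: vertex_def)
  next
    case 2
    have "cross3 (P (k mod 6)) (P ((k mod 6 + 1) mod 6)) (P ((k + d) mod 6)) < 0"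
      using idx by (intro 2[rule_format]) auto
    moreover have "cross3 (P 0) (P 1) (P 2) < 0"
      using 2[rule_format, of 0 2] by simp
    ultimately show ?thesis
      using idx(1) by (simp add: vertex_def mult_neg_neg)
  qed
qed

lemma same_sign_abs_eq:
  fixes x y a :: real
  assumes "0 < x * y" "\<bar>x\<bar> = a * \<bar>y\<bar>"
  shows "x = a * y"
  using assms by (auto simp: zero_less_mult_iff)

lemma convex_hexagon_signed_area:
  fixes k d :: nat
  assumes "convex_hexagon P" "2 \<le> d" "d \<le> 5"
    and "tri_area (vertex P k) (vertex P (k + 1)) (vertex P (k + d)) = a * tri_area (P 0) (P 1) (P 2)"
  shows "cross3 (vertex P k) (vertex P (k + 1)) (vertex P (k + d)) = a * cross3 (P 0) (P 1) (P 2)"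
  using same_sign_abs_eq[OF convex_hexagon_orientation[OF assms(1-3)]] assms(4)
  by (simp add: tri_area_def)

lemma convex_side_triangle_signed:
  assumes "convex_hexagon P"
    and "\<exists>i<6. \<exists>j\<in>{(i + 3) mod 6, (i + 4) mod 6}.
           tri_area (P i) (P ((i + 1) mod 6)) (P j) = 2 * tri_area (P 0) (P 1) (P 2)"
  shows "\<exists>m. cross3 (vertex P m) (vertex P (m + 1)) (vertex P (m + 3)) = 2 * cross3 (P 0) (P 1) (P 2) \<or>
             cross3 (vertex P m) (vertex P (m + 2)) (vertex P (m + 3)) = 2 * cross3 (P 0) (P 1) (P 2)"
proof -
  obtain i d where "i < 6" "d = 3 \<or> d = 4"
    and "tri_area (P i) (P ((i + 1) mod 6)) (P ((i + d) mod 6)) = 2 * tri_area (P 0) (P 1) (P 2)"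
    using assms(2) by blast
  then have "cross3 (vertex P i) (vertex P (i + 1)) (vertex P (i + d)) = 2 * cross3 (P 0) (P 1) (P 2)"
    using convex_hexagon_signed_area[OF assms(1), of d i 2] by (auto simp: vertex_def)
  moreover have "cross3 (vertex P i) (vertex P (i + 1)) (vertex P (i + 4))
      = cross3 (vertex P (i + 4)) (vertex P (i + 4 + 2)) (vertex P (i + 4 + 3))"
  proof -
    have "(i + 4 + 2) mod 6 = i mod 6" "(i + 4 + 3) mod 6 = (i + 1) mod 6"
      by presburger+
    then show ?thesis
      by (simp add: vertex_def cross3_def algebra_simps)
  qed
  ultimately show ?thesis
    using \<open>d = 3 \<or> d = 4\<close> by metis
qed

lemma convex_equal_areas_imp_centred:
  assumes convex: "convex_hexagon P"
    and equal: "\<forall>i<6. vertex_tri_area P i = vertex_tri_area P 0"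
    and double: "\<exists>i<6. \<exists>j\<in>{(i + 3) mod 6, (i + 4) mod 6}.
                   tri_area (P i) (P ((i + 1) mod 6)) (P j) = 2 * vertex_tri_area P 0"
  shows "\<exists>c. centred_at c P \<and> cross3 c (P 0) (P 1) \<noteq> 0"
proof -
  define p where "p = vertex P"
  define K where "K = cross3 (P 0) (P 1) (P 2)"
  have area0: "vertex_tri_area P 0 = tri_area (P 0) (P 1) (P 2)"
    using equal[rule_format, of 1] vertex_tri_area_simps(2)[of P] by simp
  have vertex_K: "cross3 (p k) (p (k + 1)) (p (k + 2)) = K" for k
    using convex_hexagon_signed_area[OF convex, of 2 k 1] equal[rule_format, of "Suc k mod 6"]
      vertex_tri_area_vertex[of P k] area0
    by (simp add: p_def K_def)
  have "K \<noteq> 0"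
    using convex_hexagon_orientation[OF convex, of 2 0] by (auto simp: K_def)
  have skip: "cross3 (p k) (p (k + 1)) (p (k + 3)) \<noteq> 0" for k
    using convex_hexagon_orientation[OF convex, of 3 k] by (auto simp: p_def)
  have "\<exists>m. cross3 (p m) (p (m + 1)) (p (m + 3)) = 2 * K \<or> cross3 (p m) (p (m + 2)) (p (m + 3)) = 2 * K"
    using convex_side_triangle_signed[OF convex] double area0 by (simp add: p_def K_def)
  then obtain c where c: "\<And>k. p (k + 1) = p k + p (k + 2) - c"
    using periodic_hexagon_centred[OF _ vertex_K \<open>K \<noteq> 0\<close> skip]
    by (metis add.commute mod_add_self1 p_def vertex_def)
  have "centred_at c P"
    unfolding centred_at_def
  proof (intro allI impI)
    fix k :: nat
    assume "k < 4"
    then show "P (k + 1) = P k + P (k + 2) - c"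
      using c[of k] by (simp add: p_def vertex_def)
  qed
  moreover have "cross3 c (P 0) (P 1) \<noteq> 0"
    using centred_at_cross3[OF \<open>centred_at c P\<close>] \<open>K \<noteq> 0\<close> by (simp add: K_def)
  ultimately show ?thesis
    by blast
qed

theorem proposition3:
  fixes P :: hexagon
  assumes "convex_hexagon P"
  shows "affine_regular P \<longleftrightarrow>
           ((\<forall>i<6. vertex_tri_area P i = vertex_tri_area P 0) \<and>
            (\<exists>i<6. \<exists>j\<in>{(i + 3) mod 6, (i + 4) mod 6}.
               tri_area (P i) (P ((i + 1) mod 6)) (P j) = 2 * vertex_tri_area P 0))"
    (is "_ \<longleftrightarrow> ?area_conditions")
proof
  assume "affine_regular P"
  then obtain c where c: "centred_at c P"
    using affine_regular_imp_centred by blast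
  have "\<forall>i<6. vertex_tri_area P i = vertex_tri_area P 0"
    using centred_at_areas(1)[OF c] by simp
  moreover have "tri_area (P 0) (P ((0 + 1) mod 6)) (P ((0 + 3) mod 6)) = 2 * vertex_tri_area P 0"
    using centred_at_areas[OF c] by simp
  ultimately show ?area_conditions
    by (metis insertI1 zero_less_numeral)
next
  assume ?area_conditions
  then show "affine_regular P"
    using convex_equal_areas_imp_centred[OF assms] centred_imp_affine_regular by blast
qed

end
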